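(* For $\varepsilon\in(0,1)$ let $u^\varepsilon\in C^2([0,\infty))$ be the solution on all of $[0,\infty)$ of the Dirichlet problem $2(u^\varepsilon)^3=\varepsilon(u^\varepsilon)''$ in $(0,\infty)$, $u^\varepsilon(0)=1$. Then $u^\varepsilon\to u\equiv0$ locally uniformly in $(0,\infty)$ as $\varepsilon\to0^+$, and \[ |u^\varepsilon(x)-u(x)|=\frac{\sqrt{\varepsilon}}{x+\sqrt{\varepsilon}}\ge\frac{1}{2x}\sqrt{\varepsilon}\qquad\text{for all }x\ge1. \] In particular, for any $d>1$, the optimal rate of convergence of $u^\varepsilon$ to $u$ in the $L^\infty((1,d))$-norm is $O(\sqrt{\varepsilon})$, i.e., there is $c>0$ with $c\sqrt{\varepsilon}\le\|u^\varepsilon-u\|_{L^\infty((1,d))}\le\sqrt{\varepsilon}$ for all $\varepsilon\in(0,1)$. *)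

theory Defs
  imports "HOL-Analysis.Analysis"
begin

definition dirichlet_solution :: "real \<Rightarrow> (real \<Rightarrow> real) \<Rightarrow> bool" where
  "dirichlet_solution \<epsilon> u \<longleftrightarrow>
     (\<exists>u' u''. (\<forall>x\<ge>0. (u has_real_derivative u' x) (at x within {0..}) \<and>
                       (u' has_real_derivative u'' x) (at x within {0..}))
             \<and> continuous_on {0..} u''
             \<and> (\<forall>x>0. 2 * (u x)^3 = \<epsilon> * u'' x))
     \<and> u 0 = 1"

end

(*
  The energy e u'^2 - u^4 of a solution of e u'' = 2 u^3 is conserved, and g = u u' satisfies
  e g' = e u'^2 + 2 u^4 >= |e u'^2 - u^4|, so g grows at least at the rate |energy| / e.
  Should g ever become positive, u would grow without bound, the energy identity would then
  give u' >= c u^2, and u would blow up in finite time. Since u lives on all of [0, oo), g <= 0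
  throughout, which forces the energy to vanish. Hence u' = - u |u| / sqrt e, an autonomous
  equation with nonincreasing right-hand side; the squared difference of two of its solutions
  is nonincreasing, so the solution with u 0 = 1 is sqrt e / (x + sqrt e).
*)

theory Submission
  imports Defs
begin

lemma riccati_inequality_blowup:
  fixes u u' :: "real \<Rightarrow> real"
  assumes c: "c > 0"
    and deriv: "\<And>x. x \<ge> a \<Longrightarrow> (u has_real_derivative u' x) (at x)"
    and pos: "\<And>x. x \<ge> a \<Longrightarrow> u x > 0"
    and riccati: "\<And>x. x \<ge> a \<Longrightarrow> c * (u x)\<^sup>2 \<le> u' x"
  shows False
proof -
  define w where "w x = 1 / u x + c * x" for x
  define b where "b = a + 1 / (c * u a) + 1"
  have "a \<le> b"
    using c pos[of a] by (simp add: b_def)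
  have "w b \<le> w a"
  proof (rule DERIV_nonpos_imp_decreasing_open[OF \<open>a \<le> b\<close>])
    fix x assume x: "a < x" "x < b"
    have "(w has_real_derivative - u' x / (u x)\<^sup>2 + c) (at x)"
      unfolding w_def using deriv[of x] pos[of x] x
      by (auto intro!: derivative_eq_intros simp: power2_eq_square field_simps)
    moreover have "- u' x / (u x)\<^sup>2 + c \<le> 0"
      using riccati[of x] pos[of x] x by (simp add: field_simps)
    ultimately show "\<exists>y. (w has_real_derivative y) (at x) \<and> y \<le> 0"
      by blast
  next
    have "continuous_on {a..b} u"
      by (intro continuous_at_imp_continuous_on ballI DERIV_isCont[OF deriv]) auto
    then show "continuous_on {a..b} w"
      unfolding w_def using pos by (intro continuous_intros) (auto simp: less_imp_neq[symmetric])
  qed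
  then have "1 / u b \<le> 1 / u a - c * (b - a)"
    by (simp add: w_def algebra_simps)
  also have "\<dots> = - c"
    using c pos[of a] by (simp add: b_def field_simps)
  finally have "1 / u b < 0"
    using c by linarith
  with pos[of b] \<open>a \<le> b\<close> show False
    by simp
qed

lemma mono_times_abs: "mono (\<lambda>t::real. t * \<bar>t\<bar>)"
proof (rule monoI)
  fix y z :: real assume "y \<le> z"
  then show "y * \<bar>y\<bar> \<le> z * \<bar>z\<bar>"
    using mult_mono[of y z y z] mult_mono[of "-z" "-y" "-z" "-y"] by (auto simp: abs_if)
qed

lemma antimono_ode_unique:
  fixes f g F :: "real \<Rightarrow> real"
  assumes F: "antimono F"
    and f: "continuous_on {a..} f" "\<And>x. x > a \<Longrightarrow> (f has_real_derivative F (f x)) (at x)"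
    and g: "continuous_on {a..} g" "\<And>x. x > a \<Longrightarrow> (g has_real_derivative F (g x)) (at x)"
    and "f a = g a" "a \<le> x"
  shows "f x = g x"
proof -
  have "(f x - g x)\<^sup>2 \<le> (f a - g a)\<^sup>2"
  proof (rule DERIV_nonpos_imp_decreasing_open[OF \<open>a \<le> x\<close>])
    fix y assume "a < y" "y < x"
    then have "((\<lambda>y. (f y - g y)\<^sup>2) has_real_derivative 2 * (f y - g y) * (F (f y) - F (g y))) (at y)"
      using f(2)[of y] g(2)[of y] by (auto intro!: derivative_eq_intros)
    moreover have "(f y - g y) * (F (f y) - F (g y)) \<le> 0"
      using antimonoD[OF F, of "f y" "g y"] antimonoD[OF F, of "g y" "f y"]
      by (cases "f y \<le> g y") (auto simp: mult_le_0_iff)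
    ultimately show "\<exists>d. ((\<lambda>y. (f y - g y)\<^sup>2) has_real_derivative d) (at y) \<and> d \<le> 0"
      by (metis mult_le_0_iff zero_le_numeral mult.assoc)
  next
    show "continuous_on {a..x} (\<lambda>y. (f y - g y)\<^sup>2)"
      using f(1) g(1) by (intro continuous_intros) (auto elim: continuous_on_subset)
  qed
  with \<open>f a = g a\<close> show ?thesis
    by simp
qed

locale cubic_ode_solution =
  fixes e :: real and u u' u'' :: "real \<Rightarrow> real"
  assumes e_pos: "e > 0"
    and derivs: "\<And>x. x \<ge> 0 \<Longrightarrow> (u has_real_derivative u' x) (at x within {0..}) \<and>
                            (u' has_real_derivative u'' x) (at x within {0..})"
    and ode: "\<And>x. x > 0 \<Longrightarrow> 2 * (u x)^3 = e * u'' x"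
begin

lemma has_real_derivative_u: "x > 0 \<Longrightarrow> (u has_real_derivative u' x) (at x)"
  using derivs[of x] at_within_interior[of x "{0..}"] by simp

lemma has_real_derivative_u': "x > 0 \<Longrightarrow> (u' has_real_derivative u'' x) (at x)"
  using derivs[of x] at_within_interior[of x "{0..}"] by simp

lemma u''_eq: "x > 0 \<Longrightarrow> u'' x = 2 * (u x)^3 / e"
  using ode[of x] e_pos by (simp add: field_simps)

lemma continuous_on_u: "continuous_on {0..} u"
  using derivs by (auto simp: continuous_on_eq_continuous_within intro: DERIV_continuous)

lemma continuous_on_u': "continuous_on {0..} u'"
  using derivs by (auto simp: continuous_on_eq_continuous_within intro: DERIV_continuous)

definition energy :: real where
  "energy = e * (u' 0)\<^sup>2 - (u 0)^4"

lemma energy_conserved: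
  assumes "x \<ge> 0"
  shows "e * (u' x)\<^sup>2 - (u x)^4 = energy"
proof -
  let ?E = "\<lambda>x. e * (u' x)\<^sup>2 - (u x)^4"
  have "?E x = ?E 0"
  proof (cases "x = 0")
    case False
    with assms have "x > 0" by simp
    then show ?thesis
    proof (rule DERIV_isconst_end)
      show "continuous_on {0..x} ?E"
        using continuous_on_u continuous_on_u'
        by (intro continuous_intros) (auto elim: continuous_on_subset)
      fix y :: real assume "0 < y" "y < x"
      then show "(?E has_real_derivative 0) (at y)"
        using has_real_derivative_u[of y] has_real_derivative_u'[of y] ode[of y]
        by (auto intro!: derivative_eq_intros simp: algebra_simps)
    qed
  qed simp
  then show ?thesis
    by (simp add: energy_def)
qed

lemma u_u'_growth:
  assumes "0 \<le> a" "a \<le> x"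
  shows "u a * u' a + \<bar>energy\<bar> / e * (x - a) \<le> u x * u' x"
proof -
  let ?k = "\<bar>energy\<bar> / e"
  have "u a * u' a - ?k * a \<le> u x * u' x - ?k * x"
  proof (rule DERIV_nonneg_imp_increasing_open[OF \<open>a \<le> x\<close>])
    fix y assume y: "a < y" "y < x"
    with assms have "y > 0" by simp
    have "((\<lambda>y. u y * u' y - ?k * y) has_real_derivative (u' y)\<^sup>2 + 2 * (u y)^4 / e - ?k) (at y)"
      using has_real_derivative_u[OF \<open>y > 0\<close>] has_real_derivative_u'[OF \<open>y > 0\<close>] u''_eq[OF \<open>y > 0\<close>] e_pos
      by (auto intro!: derivative_eq_intros simp: power2_eq_square power4_eq_xxxx power3_eq_cube)
    moreover have "?k \<le> (u' y)\<^sup>2 + 2 * (u y)^4 / e"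
    proof -
      have "\<bar>energy\<bar> = \<bar>e * (u' y)\<^sup>2 - (u y)^4\<bar>"
        using energy_conserved[of y] \<open>y > 0\<close> by simp
      also have "\<dots> \<le> e * (u' y)\<^sup>2 + 2 * (u y)^4"
        using e_pos by (simp add: abs_le_iff)
      finally show ?thesis
        using e_pos by (simp add: field_simps)
    qed
    ultimately show "\<exists>d. ((\<lambda>y. u y * u' y - ?k * y) has_real_derivative d) (at y) \<and> 0 \<le> d"
      by (intro exI conjI) auto
  next
    show "continuous_on {a..x} (\<lambda>y. u y * u' y - ?k * y)"
      using continuous_on_u continuous_on_u' assms
      by (intro continuous_intros) (auto elim: continuous_on_subset)
  qed
  then show ?thesis
    unfolding right_diff_distrib by linarith
qed

lemma positive_increasing_persists:
  assumes "0 \<le> a" "u a > 0" "u' a > 0" "a \<le> x"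
  shows "u x > 0" "u' x > 0" "2 * (u a * u' a) * (x - a) \<le> (u x)\<^sup>2"
proof -
  let ?p = "u a * u' a"
  have "?p > 0"
    using assms by simp
  have growth: "?p \<le> u y * u' y" if "a \<le> y" for y
  proof -
    have "0 \<le> \<bar>energy\<bar> / e * (y - a)"
      using e_pos that by simp
    then show ?thesis
      using u_u'_growth[OF \<open>0 \<le> a\<close> that] by linarith
  qed
  have pos: "u y > 0" if y: "a \<le> y" for y
  proof (rule ccontr)
    assume "\<not> u y > 0"
    moreover have "continuous_on {a..y} u"
      using continuous_on_u assms(1) by (auto elim: continuous_on_subset)
    ultimately obtain z where "a \<le> z" "z \<le> y" "u z = 0"
      using IVT2'[of u y 0 a] assms y by auto
    with growth[of z] \<open>?p > 0\<close> show False
      by simp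
  qed
  then show "u x > 0"
    using assms by simp
  moreover have "u x * u' x > 0"
    using growth[OF \<open>a \<le> x\<close>] \<open>?p > 0\<close> by linarith
  ultimately show "u' x > 0"
    by (rule zero_less_mult_pos[rotated])
  have "(u a)\<^sup>2 - 2 * ?p * a \<le> (u x)\<^sup>2 - 2 * ?p * x"
  proof (rule DERIV_nonneg_imp_increasing_open[OF \<open>a \<le> x\<close>])
    fix y assume "a < y" "y < x"
    then have "((\<lambda>y. (u y)\<^sup>2 - 2 * ?p * y) has_real_derivative 2 * (u y * u' y) - 2 * ?p) (at y)"
      using has_real_derivative_u[of y] assms(1) by (auto intro!: derivative_eq_intros)
    then show "\<exists>d. ((\<lambda>y. (u y)\<^sup>2 - 2 * ?p * y) has_real_derivative d) (at y) \<and> 0 \<le> d"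
      using growth[of y] \<open>a < y\<close> by (intro exI conjI) auto
  next
    show "continuous_on {a..x} (\<lambda>y. (u y)\<^sup>2 - 2 * ?p * y)"
      using continuous_on_u assms(1) by (intro continuous_intros) (auto elim: continuous_on_subset)
  qed
  then show "2 * ?p * (x - a) \<le> (u x)\<^sup>2"
    unfolding right_diff_distrib using zero_le_power2[of "u a"] by linarith
qed

lemma riccati_bound_for_large_u:
  assumes "0 \<le> x" "0 \<le> u' x" "1 + 2 * \<bar>energy\<bar> \<le> (u x)\<^sup>2"
  shows "(u x)\<^sup>2 / sqrt (2 * e) \<le> u' x"
proof -
  have "(u x)\<^sup>2 * 1 \<le> (u x)\<^sup>2 * (u x)\<^sup>2"
    using assms(3) by (intro mult_left_mono) simp_all
  with assms(3) have "2 * \<bar>energy\<bar> \<le> (u x)^4"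
    by (simp flip: power_add)
  then have "(u x)^4 \<le> 2 * e * (u' x)\<^sup>2"
    using energy_conserved[OF assms(1)] by linarith
  then have "((u x)\<^sup>2 / sqrt (2 * e))\<^sup>2 \<le> (u' x)\<^sup>2"
    using e_pos by (simp add: power_divide pos_divide_le_eq mult.commute flip: power_mult)
  with assms(2) show ?thesis
    by (rule power2_le_imp_le[rotated])
qed

lemma no_blowup:
  assumes "0 \<le> a" "u a > 0"
  shows "u' a \<le> 0"
proof (rule ccontr)
  assume "\<not> u' a \<le> 0"
  then have "u' a > 0" by simp
  define p where "p = u a * u' a"
  define b where "b = a + (1 + 2 * \<bar>energy\<bar>) / (2 * p) + 1"
  have "p > 0"
    using assms \<open>u' a > 0\<close> by (simp add: p_def)
  have "a < b"
    using \<open>p > 0\<close> by (simp add: b_def add_pos_pos)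
  show False
  proof (rule riccati_inequality_blowup[of "1 / sqrt (2 * e)" b u u'])
    show "1 / sqrt (2 * e) > 0"
      using e_pos by simp
    fix x assume "b \<le> x"
    with \<open>a < b\<close> assms have "a \<le> x" "x > 0"
      by auto
    show "(u has_real_derivative u' x) (at x)"
      by (rule has_real_derivative_u[OF \<open>x > 0\<close>])
    note persists = positive_increasing_persists[OF assms \<open>u' a > 0\<close> \<open>a \<le> x\<close>]
    show "u x > 0"
      by (rule persists(1))
    have "(1 + 2 * \<bar>energy\<bar>) / (2 * p) \<le> x - a"
      using \<open>b \<le> x\<close> by (simp add: b_def)
    then have "1 + 2 * \<bar>energy\<bar> \<le> 2 * p * (x - a)"
      using \<open>p > 0\<close> by (simp add: pos_divide_le_eq mult.commute)
    also have "\<dots> \<le> (u x)\<^sup>2"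
      using persists(3) by (simp add: p_def)
    finally show "1 / sqrt (2 * e) * (u x)\<^sup>2 \<le> u' x"
      using riccati_bound_for_large_u[of x] persists(2) \<open>x > 0\<close> by simp
  qed
qed

lemma uminus_solution: "cubic_ode_solution e (\<lambda>x. - u x) (\<lambda>x. - u' x) (\<lambda>x. - u'' x)"
  using e_pos derivs ode by unfold_locales (auto intro: DERIV_minus)

lemma u_u'_nonpos:
  assumes "0 \<le> x"
  shows "u x * u' x \<le> 0"
  using no_blowup[OF assms] cubic_ode_solution.no_blowup[OF uminus_solution assms]
  by (cases "u x" "0::real" rule: linorder_cases) (auto simp: mult_le_0_iff)

lemma energy_eq_0: "energy = 0"
proof (rule ccontr)
  assume "energy \<noteq> 0"
  define x where "x = e * (\<bar>u 0 * u' 0\<bar> + 1) / \<bar>energy\<bar>"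
  have "0 \<le> x"
    using e_pos by (simp add: x_def)
  have "\<bar>energy\<bar> / e * (x - 0) = \<bar>u 0 * u' 0\<bar> + 1"
    using e_pos \<open>energy \<noteq> 0\<close> by (simp add: x_def)
  with u_u'_growth[OF order_refl \<open>0 \<le> x\<close>] have "u x * u' x > 0"
    by linarith
  with u_u'_nonpos[OF \<open>0 \<le> x\<close>] show False
    by simp
qed

lemma first_order_ode:
  assumes "0 \<le> x"
  shows "u' x = - u x * \<bar>u x\<bar> / sqrt e"
proof -
  have "(u' x)\<^sup>2 = (u x)^4 / e"
    using energy_conserved[OF assms] energy_eq_0 e_pos by (simp add: field_simps)
  also have "\<dots> = (u x * \<bar>u x\<bar> / sqrt e)\<^sup>2"
    using e_pos by (simp add: power_mult_distrib power_divide power2_abs flip: power_add)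
  finally have "u' x = u x * \<bar>u x\<bar> / sqrt e \<or> u' x = - (u x * \<bar>u x\<bar> / sqrt e)"
    by (simp add: power2_eq_iff)
  with u_u'_nonpos[OF assms] e_pos show ?thesis
    by (cases "u x" "0::real" rule: linorder_cases) (auto simp: mult_le_0_iff divide_le_0_iff)
qed

lemma explicit_solution:
  assumes "u 0 = 1" "0 \<le> x"
  shows "u x = sqrt e / (x + sqrt e)"
proof -
  define a where "a = sqrt e"
  have "a > 0"
    using e_pos by (simp add: a_def)
  have "u x = a / (x + a)"
  proof (rule antimono_ode_unique[where F = "\<lambda>y. - y * \<bar>y\<bar> / a" and a = 0
        and f = u and g = "\<lambda>x. a / (x + a)"])
    show "antimono (\<lambda>y. - y * \<bar>y\<bar> / a)"
      using monoD[OF mono_times_abs] \<open>a > 0\<close> by (intro antimonoI) (simp add: divide_right_mono)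
    show "(u has_real_derivative - u x * \<bar>u x\<bar> / a) (at x)" if "0 < x" for x
      using has_real_derivative_u[OF that] first_order_ode[of x] that by (simp add: a_def)
    show "((\<lambda>x. a / (x + a)) has_real_derivative - (a / (x + a)) * \<bar>a / (x + a)\<bar> / a) (at x)"
      if "0 < x" for x
    proof -
      have "x + a > 0"
        using that \<open>a > 0\<close> by simp
      then have "- (a / (x + a)) * \<bar>a / (x + a)\<bar> / a = - a / (x + a)\<^sup>2"
        using \<open>a > 0\<close> by (simp add: power2_eq_square)
      moreover have "((\<lambda>x. a / (x + a)) has_real_derivative - a / (x + a)\<^sup>2) (at x)"
        using \<open>x + a > 0\<close> by (auto intro!: derivative_eq_intros simp: power2_eq_square)
      ultimately show ?thesis
        by simp
    qed
    show "continuous_on {0..} (\<lambda>x. a / (x + a))"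
      using \<open>a > 0\<close> by (intro continuous_intros) auto
  qed (use continuous_on_u assms \<open>a > 0\<close> in auto)
  then show ?thesis
    by (simp add: a_def)
qed

end

lemma dirichlet_solution_eq:
  assumes "dirichlet_solution e u" "e > 0" "0 \<le> x"
  shows "u x = sqrt e / (x + sqrt e)"
proof -
  obtain u' u'' where "\<forall>x\<ge>0. (u has_real_derivative u' x) (at x within {0..}) \<and>
      (u' has_real_derivative u'' x) (at x within {0..})" "\<forall>x>0. 2 * (u x)^3 = e * u'' x" "u 0 = 1"
    using assms(1) unfolding dirichlet_solution_def by blast
  then interpret cubic_ode_solution e u u' u''
    using \<open>e > 0\<close> by unfold_locales auto
  show ?thesis
    using explicit_solution \<open>u 0 = 1\<close> \<open>0 \<le> x\<close> .
qed

lemma compact_subset_atLeast_pos: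
  fixes K :: "real set"
  assumes "compact K" "K \<subseteq> {0<..}"
  obtains m where "m > 0" "K \<subseteq> {m..}"
proof (cases "K = {}")
  case False
  then obtain m where "m \<in> K" "\<forall>x\<in>K. m \<le> x"
    using compact_attains_inf[OF \<open>compact K\<close>] by blast
  with assms(2) that show ?thesis
    by auto
qed (use that[of 1] in auto)

lemma uniform_limit_sqrt_profile_atLeast:
  assumes "m > 0"
  shows "uniform_limit {m..} (\<lambda>\<epsilon> x. sqrt \<epsilon> / (x + sqrt \<epsilon>)) (\<lambda>x. 0) (at_right 0)"
proof (rule uniform_limitI)
  fix r :: real assume "r > 0"
  have "((\<lambda>\<epsilon>. sqrt \<epsilon> / m) \<longlongrightarrow> 0) (at_right 0)"
    using \<open>m > 0\<close> by (auto intro!: tendsto_eq_intros)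
  then have "\<forall>\<^sub>F \<epsilon> in at_right 0. sqrt \<epsilon> / m < r"
    using \<open>r > 0\<close> by (rule order_tendstoD)
  with eventually_at_right_less
  show "\<forall>\<^sub>F \<epsilon> in at_right 0. \<forall>x\<in>{m..}. dist (sqrt \<epsilon> / (x + sqrt \<epsilon>)) 0 < r"
  proof eventually_elim
    case (elim \<epsilon>)
    show ?case
    proof
      fix x :: real assume "x \<in> {m..}"
      then have "dist (sqrt \<epsilon> / (x + sqrt \<epsilon>)) 0 = sqrt \<epsilon> / (x + sqrt \<epsilon>)"
        using \<open>m > 0\<close> elim by simp
      also have "\<dots> \<le> sqrt \<epsilon> / m"
        using \<open>x \<in> {m..}\<close> \<open>m > 0\<close> elim by (intro frac_le) (auto intro: add_increasing2)
      finally show "dist (sqrt \<epsilon> / (x + sqrt \<epsilon>)) 0 < r"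
        using elim by linarith
    qed
  qed
qed

lemma uniform_limit_sqrt_profile:
  assumes "compact K" "K \<subseteq> {0<..}"
  shows "uniform_limit K (\<lambda>\<epsilon> x. sqrt \<epsilon> / (x + sqrt \<epsilon>)) (\<lambda>x. 0) (at_right 0)"
proof -
  obtain m where "m > 0" "K \<subseteq> {m..}"
    using compact_subset_atLeast_pos[OF assms] .
  then show ?thesis
    using uniform_limit_on_subset uniform_limit_sqrt_profile_atLeast by blast
qed

lemma divide_double_le_divide_add:
  fixes s x :: real
  assumes "0 < s" "s \<le> x"
  shows "s / (2 * x) \<le> s / (x + s)"
  using assms by (intro frac_le) auto

lemma SUP_sqrt_profile_bounds:
  fixes s d :: real
  assumes "0 < s" "s < 1" "1 < d"
  shows "s / 3 \<le> (SUP x\<in>{1<..<d}. s / (x + s))" "(SUP x\<in>{1<..<d}. s / (x + s)) \<le> s"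
proof -
  have le: "s / (x + s) \<le> s" if "x \<in> {1<..<d}" for x
    using frac_le[of s s 1 "x + s"] that assms by simp
  then show "(SUP x\<in>{1<..<d}. s / (x + s)) \<le> s"
    using assms by (intro cSUP_least) auto
  define x0 where "x0 = min ((1 + d) / 2) 2"
  have "x0 \<in> {1<..<d}" "x0 \<le> 2"
    using assms by (auto simp: x0_def min_def)
  then have "s / 3 \<le> s / (x0 + s)"
    using assms by (intro frac_le) auto
  also have "\<dots> \<le> (SUP x\<in>{1<..<d}. s / (x + s))"
    using le \<open>x0 \<in> {1<..<d}\<close> by (intro cSUP_upper bdd_aboveI2)
  finally show "s / 3 \<le> (SUP x\<in>{1<..<d}. s / (x + s))" .
qed

theorem lemma4p6:
  fixes U :: "real \<Rightarrow> real \<Rightarrow> real"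
  assumes sol: "\<forall>\<epsilon>\<in>{0<..<1}. dirichlet_solution \<epsilon> (U \<epsilon>)"
  shows "(\<forall>K. compact K \<and> K \<subseteq> {0<..} \<longrightarrow> uniform_limit K U (\<lambda>x. 0) (at_right 0))
    \<and> (\<forall>\<epsilon>\<in>{0<..<1}. \<forall>x\<ge>1.
          \<bar>U \<epsilon> x - 0\<bar> = sqrt \<epsilon> / (x + sqrt \<epsilon>) \<and> sqrt \<epsilon> / (x + sqrt \<epsilon>) \<ge> sqrt \<epsilon> / (2 * x))
    \<and> (\<forall>d>1. \<exists>c>0. \<forall>\<epsilon>\<in>{0<..<1}.
          c * sqrt \<epsilon> \<le> (SUP x\<in>{1<..<d}. \<bar>U \<epsilon> x - 0\<bar>) \<and>
          (SUP x\<in>{1<..<d}. \<bar>U \<epsilon> x - 0\<bar>) \<le> sqrt \<epsilon>)"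
proof -
  have U: "U \<epsilon> x = sqrt \<epsilon> / (x + sqrt \<epsilon>)" if "\<epsilon> \<in> {0<..<1}" "0 \<le> x" for \<epsilon> x
    using dirichlet_solution_eq[of \<epsilon> "U \<epsilon>" x] sol that by simp
  have abs_U: "\<bar>U \<epsilon> x - 0\<bar> = sqrt \<epsilon> / (x + sqrt \<epsilon>)" if "\<epsilon> \<in> {0<..<1}" "0 \<le> x" for \<epsilon> x
    using U[OF that] that by simp
  have "uniform_limit K U (\<lambda>x. 0) (at_right 0)" if K: "compact K" "K \<subseteq> {0<..}" for K
  proof -
    have "\<forall>\<^sub>F \<epsilon> in at_right 0. \<forall>x\<in>K. sqrt \<epsilon> / (x + sqrt \<epsilon>) = U \<epsilon> x"
      using eventually_at_right_real[OF zero_less_one]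
      by eventually_elim (use U K(2) in force)
    with uniform_limit_sqrt_profile[OF K] show ?thesis
      by (simp add: uniform_limit_cong)
  qed
  moreover have "sqrt \<epsilon> / (2 * x) \<le> sqrt \<epsilon> / (x + sqrt \<epsilon>)" if "\<epsilon> \<in> {0<..<1}" "1 \<le> x" for \<epsilon> x
    using that by (intro divide_double_le_divide_add) (auto intro: order_trans[of _ 1])
  moreover have "(SUP x\<in>{1<..<d}. \<bar>U \<epsilon> x - 0\<bar>) = (SUP x\<in>{1<..<d}. sqrt \<epsilon> / (x + sqrt \<epsilon>))"
    if "\<epsilon> \<in> {0<..<1}" for \<epsilon> d
    using abs_U[OF that] by (intro SUP_cong) auto
  ultimately show ?thesis
    using abs_U SUP_sqrt_profile_bounds[of "sqrt _"]
    by (fastforce intro!: exI[of _ "1/3"])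
qed

end
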